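(* Let $k>0$ and $F_n(x,y;k)=\sum_{w\in B_n}x^{\mathrm{wexc}(w)}y^{\mathrm{aexc}(w)}k^{n-\mathrm{cyc}(w)}$ (with $F_0=1$). Then $$\sum_{n\ge0}F_n(x,y;k)\frac{z^n}{n!}=\left(\frac{(y-x)e^{kz(y-x)}}{y-xe^{2kz(y-x)}}\right)^{1/k}.$$
   Context: $B_n$ is the hyperoctahedral group of signed permutations $w$ of $\pm[n]$ with $w(-i)=-w(i)$, written in standard cycle decomposition (each cycle starts with its element of largest absolute value, cycles ordered by increasing absolute value of first elements); $\mathrm{cyc}(w)$ is the number of cycles. An index $i\in[n]$ is a weak excedance if $w(i)=i$ or $w(|w(i)|)>w(i)$, and an anti-excedance if $w(i)=-i$ or $w(|w(i)|)<w(i)$; $\mathrm{wexc}(w)$, $\mathrm{aexc}(w)$ denote their numbers. *)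

theory Defs
  imports "HOL-Computational_Algebra.Formal_Power_Series"
begin

definition pm_set :: "nat \<Rightarrow> int set" where
  "pm_set n = {i. 1 \<le> \<bar>i\<bar> \<and> \<bar>i\<bar> \<le> int n}"

text \<open>Hyperoctahedral group \<open>B_n\<close>: signed permutations of \<open>\<plusminus>[n]\<close>,
  extended by the identity outside \<open>\<plusminus>[n]\<close> (so that each element is a unique function).\<close>
definition signed_perms :: "nat \<Rightarrow> (int \<Rightarrow> int) set" where
  "signed_perms n = {w. bij_betw w (pm_set n) (pm_set n)
                        \<and> (\<forall>i \<in> pm_set n. w (- i) = - w i)
                        \<and> (\<forall>i. i \<notin> pm_set n \<longrightarrow> w i = i)}"

text \<open>Number of cycles in the standard cycle decomposition: the cycles are the cycles
  of the underlying permutation \<open>i \<mapsto> |w(i)|\<close> of \<open>[n]\<close> (signs are bars on entries).\<close>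
definition cyc :: "nat \<Rightarrow> (int \<Rightarrow> int) \<Rightarrow> nat" where
  "cyc n w = card ((\<lambda>i. {((\<lambda>j. \<bar>w j\<bar>) ^^ m) i | m. True}) ` {1..int n})"

definition wexc :: "nat \<Rightarrow> (int \<Rightarrow> int) \<Rightarrow> nat" where
  "wexc n w = card {i \<in> {1..int n}. w i = i \<or> w \<bar>w i\<bar> > w i}"

definition aexc :: "nat \<Rightarrow> (int \<Rightarrow> int) \<Rightarrow> nat" where
  "aexc n w = card {i \<in> {1..int n}. w i = - i \<or> w \<bar>w i\<bar> < w i}"

definition F_poly :: "nat \<Rightarrow> real \<Rightarrow> real \<Rightarrow> real \<Rightarrow> real" where
  "F_poly n x y k = (\<Sum>w \<in> signed_perms n. x ^ wexc n w * y ^ aexc n w * k ^ (n - cyc n w))"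

text \<open>Real power \<open>G^a\<close> of a formal power series with constant term 1:
  \<open>(1 + X)^a\<close> (the binomial series) composed with \<open>G - 1\<close>.\<close>
definition fps_powr1 :: "real fps \<Rightarrow> real \<Rightarrow> real fps" where
  "fps_powr1 G a = fps_binomial a oo (G - 1)"

end

theory Submission
  imports Defs "HOL-Combinatorics.Orbits" "HOL-Analysis.Derivative"
begin

(* Every signed permutation of [m+1] arises in exactly one way from one of [m] by inserting m+1
   with a sign: either as a new cycle, which adds a cycle and, for sign +, a weak excedance, or
   right after some j = |w(p)| in its cycle, which keeps the cycles and turns the weak excedance
   count a into a + 1 - [p is a weak excedance].  Summing the weights gives
     F_{m+1} = (x + y + 2kmx) F_m + 2kx(y - x) dF_m/dx.
   With d = y - x, the polynomials n! [z^n] e^{dz} (1 - (x/d)(e^{2kdz} - 1))^{-1/k}, expanded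
   binomially, satisfy the same recurrence, and this series equals the stated power of
   d e^{kdz} / (y - x e^{2kdz}) because both solve the same first-order linear ODE. *)

unbundle fps_syntax

section \<open>Formal power series\<close>

lemma fps_deriv_eq_mult_imp_eq:
  fixes f g R :: "'a::field_char_0 fps"
  assumes f: "fps_deriv f = R * f" and g: "fps_deriv g = R * g" and "f $ 0 = g $ 0"
  shows "f = g"
proof (rule fps_ext)
  fix n show "f $ n = g $ n"
  proof (induction n rule: less_induct)
    case (less n)
    show ?case
    proof (cases n)
      case 0 then show ?thesis using assms(3) by simp
    next
      case (Suc m)
      have "of_nat (Suc m) * f $ Suc m = (\<Sum>i=0..m. R $ i * f $ (m - i))"
        using arg_cong[OF f, of "\<lambda>h. fps_nth h m"] by (simp add: fps_mult_nth)
      also have "\<dots> = (\<Sum>i=0..m. R $ i * g $ (m - i))"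
        using less Suc by (intro sum.cong) auto
      also have "\<dots> = of_nat (Suc m) * g $ Suc m"
        using arg_cong[OF g, of "\<lambda>h. fps_nth h m"] by (simp add: fps_mult_nth)
      finally show ?thesis using Suc by (simp del: of_nat_Suc)
    qed
  qed
qed

lemma fps_deriv_mult_eq_mult_imp_eq:
  fixes f g E N :: "'a::field_char_0 fps"
  assumes "fps_deriv f * E = N * f" "fps_deriv g * E = N * g" "f $ 0 = g $ 0" "E $ 0 \<noteq> 0"
  shows "f = g"
proof (rule fps_deriv_eq_mult_imp_eq)
  have E: "E * inverse E = 1" using assms(4) by (simp add: inverse_mult_eq_1')
  have "fps_deriv h = (N * inverse E) * h" if "fps_deriv h * E = N * h" for h
  proof -
    have "fps_deriv h = fps_deriv h * E * inverse E" by (simp add: E mult.assoc)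
    then show ?thesis unfolding that by (simp add: ac_simps)
  qed
  then show "fps_deriv f = (N * inverse E) * f" "fps_deriv g = (N * inverse E) * g"
    using assms(1,2) by blast+
qed (fact assms(3))

lemma fps_deriv_binomial_compose:
  fixes G :: "'a::field_char_0 fps"
  assumes "G $ 0 = 1"
  shows "fps_deriv (fps_binomial a oo (G - 1)) * G
       = fps_const a * (fps_binomial a oo (G - 1)) * fps_deriv G"
proof -
  have G1: "(G - 1) $ 0 = 0" using assms by simp
  have "fps_deriv (fps_binomial a) * (1 + fps_X) = fps_const a * fps_binomial a"
    unfolding fps_binomial_deriv by (simp add: fps_divide_unit inverse_mult_eq_1 mult.assoc)
  then have "(fps_deriv (fps_binomial a) oo (G - 1)) * ((1 + fps_X) oo (G - 1))
      = fps_const a * (fps_binomial a oo (G - 1))"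
    by (metis G1 fps_compose_mult_distrib fps_const_compose)
  moreover have "(1 + fps_X) oo (G - 1) = G"
    using G1 by (simp add: fps_compose_add_distrib)
  ultimately show ?thesis
    by (simp add: fps_compose_deriv[OF G1] ac_simps)
qed

(* Both sides H solve the linear ODE k H' G = H G' with H(0) = 1. *)
lemma fps_binomial_compose_eq_exp_mult:
  fixes G B :: "'a::field_char_0 fps"
  assumes k: "k \<noteq> 0" and B0: "B $ 0 = 0" and GB: "G * (1 + B) = fps_exp (k * d)"
  shows "fps_binomial (1 / k) oo (G - 1) = fps_exp d * (fps_binomial (- (1 / k)) oo B)"
proof (rule fps_deriv_mult_eq_mult_imp_eq)
  define P where "P = fps_binomial (- (1 / k)) oo B"
  have G0: "G $ 0 = 1"
    using arg_cong[OF GB, of "\<lambda>f. fps_nth f 0"] B0 by simp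
  show "fps_deriv (fps_binomial (1 / k) oo (G - 1)) * G
      = (fps_const (1 / k) * fps_deriv G) * (fps_binomial (1 / k) oo (G - 1))"
    using fps_deriv_binomial_compose[OF G0] by (simp add: ac_simps)
  have P': "fps_deriv P * (1 + B) = - (fps_const (1 / k) * P * fps_deriv B)"
    using fps_deriv_binomial_compose[of "1 + B" "- (1 / k)"] B0
    by (simp add: P_def del: fps_const_neg add: fps_const_neg[symmetric])
  have GB': "fps_deriv G * (1 + B) + G * fps_deriv B = fps_const (k * d) * (G * (1 + B))"
  proof -
    have "fps_deriv (G * (1 + B)) = fps_const (k * d) * (G * (1 + B))"
      unfolding GB by simp
    then show ?thesis by (simp add: algebra_simps)
  qed
  have "fps_deriv (fps_exp d * P) * G * (1 + B)
      = fps_exp d * P * (fps_const d * (G * (1 + B))) + fps_exp d * G * (fps_deriv P * (1 + B))"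
    by (simp add: algebra_simps)
  also have "\<dots> = fps_exp d * P * (fps_const d * (G * (1 + B)))
      - fps_exp d * P * (fps_const (1 / k) * (G * fps_deriv B))"
    unfolding P' by (simp add: algebra_simps)
  also have "fps_const d * (G * (1 + B)) = fps_const (1 / k) * (fps_const (k * d) * (G * (1 + B)))"
    using k by (simp flip: mult.assoc)
  also have "\<dots> = fps_const (1 / k) * (fps_deriv G * (1 + B) + G * fps_deriv B)"
    by (simp only: GB')
  finally have "fps_deriv (fps_exp d * P) * G * (1 + B)
      = (fps_const (1 / k) * fps_deriv G) * (fps_exp d * P) * (1 + B)"
    by (simp add: algebra_simps)
  moreover have "1 + B \<noteq> 0"
    using B0 by (auto dest: arg_cong[of _ _ "\<lambda>f. fps_nth f 0"])
  ultimately show "fps_deriv (fps_exp d * P) * G = (fps_const (1 / k) * fps_deriv G) * (fps_exp d * P)"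
    by simp
  show "(fps_binomial (1 / k) oo (G - 1)) $ 0 = (fps_exp d * P) $ 0"
    using G0 B0 by (simp add: P_def)
  show "G $ 0 \<noteq> 0" using G0 by simp
qed

lemma fps_mult_compose_nth:
  fixes a b e :: "'a::comm_ring_1 fps"
  assumes b: "b $ 0 = 0"
  shows "(e * (a oo b)) $ n = (\<Sum>j\<le>n. a $ j * (e * b ^ j) $ n)"
proof -
  have compose: "(a oo b) $ i = (\<Sum>j\<le>n. a $ j * (b ^ j) $ i)" if "i \<le> n" for i
  proof -
    have "(a oo b) $ i = (\<Sum>j=0..i. a $ j * (b ^ j) $ i)" by (simp add: fps_compose_nth)
    also have "\<dots> = (\<Sum>j\<le>n. a $ j * (b ^ j) $ i)"
      using that startsby_zero_power_prefix[OF b] by (intro sum.mono_neutral_left) auto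
    finally show ?thesis .
  qed
  have "(e * (a oo b)) $ n = (\<Sum>i=0..n. e $ i * (\<Sum>j\<le>n. a $ j * (b ^ j) $ (n - i)))"
    by (simp add: fps_mult_nth compose)
  also have "\<dots> = (\<Sum>j\<le>n. a $ j * (\<Sum>i=0..n. e $ i * (b ^ j) $ (n - i)))"
    by (simp add: sum_distrib_left sum_distrib_right sum.swap[of _ "{0..n}"] ac_simps)
  also have "\<dots> = (\<Sum>j\<le>n. a $ j * (e * b ^ j) $ n)"
    by (simp add: fps_mult_nth)
  finally show ?thesis .
qed

section \<open>Expanding the generating function\<close>

lemma fps_powr1_excedance_gf:
  fixes x y k :: real
  assumes k: "k \<noteq> 0" and xy: "x \<noteq> y"
  shows "fps_powr1 (fps_const (y - x) * fps_exp (k * (y - x))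
           / (fps_const y - fps_const x * fps_exp (2 * k * (y - x)))) (1 / k)
       = fps_exp (y - x) * (fps_binomial (- (1 / k))
           oo fps_const (- x / (y - x)) * (fps_exp (2 * k * (y - x)) - 1))"
  unfolding fps_powr1_def
proof (rule fps_binomial_compose_eq_exp_mult[OF k])
  define d where "d = y - x"
  define Q where "Q = fps_const y - fps_const x * fps_exp (2 * k * d)"
  have d: "d \<noteq> 0" using xy by (simp add: d_def)
  have Q0: "Q $ 0 \<noteq> 0" using d by (simp add: Q_def d_def)
  have B: "1 + fps_const (- x / d) * (fps_exp (2 * k * d) - 1) = fps_const (1 / d) * Q"
  proof (rule fps_ext)
    fix n show "(1 + fps_const (- x / d) * (fps_exp (2 * k * d) - 1)) $ n = (fps_const (1 / d) * Q) $ n"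
      using d by (cases "n = 0") (auto simp: Q_def d_def field_simps)
  qed
  define G where "G = fps_const d * fps_exp (k * d) / Q"
  have "G * Q = fps_const d * fps_exp (k * d)"
    using Q0 by (simp add: G_def fps_divide_unit inverse_mult_eq_1 mult.assoc)
  then have "G * (fps_const (1 / d) * Q) = fps_const (1 / d) * (fps_const d * fps_exp (k * d))"
    by (simp only: mult.left_commute[of G])
  then have "G * (1 + fps_const (- x / d) * (fps_exp (2 * k * d) - 1)) = fps_exp (k * d)"
    unfolding B using d by (simp flip: mult.assoc)
  then show "fps_const (y - x) * fps_exp (k * (y - x)) / (fps_const y - fps_const x * fps_exp (2 * k * (y - x)))
      * (1 + fps_const (- x / (y - x)) * (fps_exp (2 * k * (y - x)) - 1)) = fps_exp (k * (y - x))"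
    by (simp add: G_def d_def Q_def)
qed simp

definition exp_power_coeff :: "'a::field_char_0 \<Rightarrow> nat \<Rightarrow> nat \<Rightarrow> 'a" where
  "exp_power_coeff c n j = fact n * (fps_exp 1 * (fps_exp c - 1) ^ j) $ n"

lemma fps_exp_mult_exp_minus_one_power_nth:
  "(fps_exp d * (fps_exp (c * d) - 1) ^ j) $ n = d ^ n * exp_power_coeff c n j / fact n"
proof -
  have X0: "(fps_const d * fps_X) $ 0 = 0" by simp
  have "fps_exp c - 1 oo fps_const d * fps_X = fps_exp (c * d) - 1"
    by (simp add: fps_compose_sub_distrib fps_exp_compose_linear mult.commute[of d c])
  then have "fps_exp 1 * (fps_exp c - 1) ^ j oo fps_const d * fps_X = fps_exp d * (fps_exp (c * d) - 1) ^ j"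
    by (simp add: fps_compose_mult_distrib[OF X0] fps_compose_power[OF X0, symmetric]
        fps_exp_compose_linear)
  then have "(fps_exp d * (fps_exp (c * d) - 1) ^ j) $ n = d ^ n * (fps_exp 1 * (fps_exp c - 1) ^ j) $ n"
    by (metis fps_nth_compose_linear)
  then show ?thesis
    by (simp add: exp_power_coeff_def)
qed

lemma exp_power_coeff_0_right [simp]: "exp_power_coeff c n 0 = 1"
  by (simp add: exp_power_coeff_def)

lemma exp_power_coeff_eq_0: "n < j \<Longrightarrow> exp_power_coeff c n j = 0"
proof -
  assume "n < j"
  have "\<forall>i<j. ((fps_exp c - 1) ^ j) $ i = 0"
    by (rule startsby_zero_power_prefix) simp
  then have "(fps_exp 1 * (fps_exp c - 1) ^ j) $ n = 0"
    using \<open>n < j\<close> by (auto simp: fps_mult_nth intro!: sum.neutral)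
  then show ?thesis by (simp add: exp_power_coeff_def)
qed

lemma exp_power_coeff_Suc_Suc:
  "exp_power_coeff c (Suc n) (Suc j)
     = (1 + c * of_nat (Suc j)) * exp_power_coeff c n (Suc j) + c * of_nat (Suc j) * exp_power_coeff c n j"
proof -
  define A where "A = fps_exp c - 1"
  have dA: "fps_deriv A = fps_const c * (A + 1)"
    by (simp add: A_def)
  have "fps_deriv (fps_exp 1 * A ^ Suc j)
      = fps_exp 1 * A ^ Suc j + fps_exp 1 * (fps_const (of_nat (Suc j)) * (fps_const c * (A + 1)) * A ^ j)"
    by (simp add: fps_deriv_power dA del: power_Suc of_nat_Suc)
  also have "\<dots> = fps_const (1 + c * of_nat (Suc j)) * (fps_exp 1 * A ^ Suc j)
      + fps_const (c * of_nat (Suc j)) * (fps_exp 1 * A ^ j)"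
    by (simp add: algebra_simps flip: fps_const_add del: of_nat_Suc)
  finally have deriv_nth: "fps_deriv (fps_exp 1 * A ^ Suc j) $ n
      = (1 + c * of_nat (Suc j)) * (fps_exp 1 * A ^ Suc j) $ n + c * of_nat (Suc j) * (fps_exp 1 * A ^ j) $ n"
    by simp
  have Suc_nth: "exp_power_coeff c (Suc n) i = fact n * fps_deriv (fps_exp 1 * A ^ i) $ n" for i
    unfolding exp_power_coeff_def A_def fps_deriv_nth by simp
  have nth: "exp_power_coeff c n i = fact n * (fps_exp 1 * A ^ i) $ n" for i
    by (simp add: exp_power_coeff_def A_def)
  show ?thesis
    unfolding Suc_nth deriv_nth nth by (simp only: distrib_left mult.left_commute)
qed

(* exc_poly k y n x is n! [z^n] e^{dz} (1 - (x/d)(e^{2kdz} - 1))^{-1/k} with d = y - x,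
   obtained by expanding the power binomially. *)
definition exc_coeff :: "real \<Rightarrow> nat \<Rightarrow> nat \<Rightarrow> real" where
  "exc_coeff k n j = (- 1) ^ j * (- (1 / k) gchoose j) * exp_power_coeff (2 * k) n j"

definition exc_poly :: "real \<Rightarrow> real \<Rightarrow> nat \<Rightarrow> real \<Rightarrow> real" where
  "exc_poly k y n x = (\<Sum>j\<le>n. exc_coeff k n j * x ^ j * (y - x) ^ (n - j))"

lemma exc_coeff_0_right [simp]: "exc_coeff k n 0 = 1"
  by (simp add: exc_coeff_def)

lemma exc_coeff_eq_0: "n < j \<Longrightarrow> exc_coeff k n j = 0"
  by (simp add: exc_coeff_def exp_power_coeff_eq_0)

lemma exc_coeff_Suc_Suc:
  assumes "k \<noteq> 0"
  shows "exc_coeff k (Suc n) (Suc j)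
       = (1 + 2 * k * of_nat (Suc j)) * exc_coeff k n (Suc j) + 2 * (1 + k * of_nat j) * exc_coeff k n j"
proof -
  define a where "a = - (1 / k)"
  have a: "2 * k * (of_nat j - a) = 2 * (1 + k * of_nat j)"
    using assms by (simp add: a_def algebra_simps)
  have "(- 1) ^ Suc j * (a gchoose Suc j) * (2 * k * of_nat (Suc j))
      = - ((- 1) ^ j * (2 * k) * (of_nat (Suc j) * (a gchoose Suc j)))"
    by (simp only: power_Suc mult_ac mult_minus_left mult_1)
  also have "\<dots> = - ((- 1) ^ j * (2 * k) * ((a - of_nat j) * (a gchoose j)))"
    by (simp only: gbinomial_absorption gbinomial_absorb_comp)
  also have "\<dots> = (- 1) ^ j * (a gchoose j) * (2 * k * (of_nat j - a))"
    by (simp only: mult_ac right_diff_distrib minus_diff_eq)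
  also have "\<dots> = (- 1) ^ j * (a gchoose j) * (2 * (1 + k * of_nat j))"
    by (simp only: a)
  finally have key: "(- 1) ^ Suc j * (a gchoose Suc j) * (2 * k * of_nat (Suc j))
      = (- 1) ^ j * (a gchoose j) * (2 * (1 + k * of_nat j))" .
  have "exc_coeff k (Suc n) (Suc j) = (1 + 2 * k * of_nat (Suc j)) * exc_coeff k n (Suc j)
      + (- 1) ^ Suc j * (a gchoose Suc j) * (2 * k * of_nat (Suc j)) * exp_power_coeff (2 * k) n j"
    unfolding exc_coeff_def exp_power_coeff_Suc_Suc a_def by (simp only: ring_distribs mult_ac)
  then show ?thesis
    unfolding key by (simp add: exc_coeff_def a_def mult_ac)
qed

lemma excedance_gf_nth:
  fixes x y k :: real
  assumes "x \<noteq> y"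
  shows "(fps_exp (y - x) * (fps_binomial (- (1 / k))
           oo fps_const (- x / (y - x)) * (fps_exp (2 * k * (y - x)) - 1))) $ n
       = exc_poly k y n x / fact n"
proof -
  define d where "d = y - x"
  have d: "d \<noteq> 0" using assms by (simp add: d_def)
  have "(- (1 / k) gchoose j) * (fps_exp d * (fps_const (- x / d) * (fps_exp (2 * k * d) - 1)) ^ j) $ n
      = exc_coeff k n j * x ^ j * d ^ (n - j) / fact n" if "j \<le> n" for j
  proof -
    have "d ^ n = d ^ j * d ^ (n - j)"
      using that by (simp flip: power_add)
    then have "(- x / d) ^ j * d ^ n = (- x / d * d) ^ j * d ^ (n - j)"
      unfolding power_mult_distrib by (simp only: mult.assoc)
    also have "\<dots> = (- 1) ^ j * x ^ j * d ^ (n - j)"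
      using d by (simp add: power_minus[of x])
    finally have power: "(- x / d) ^ j * d ^ n = (- 1) ^ j * x ^ j * d ^ (n - j)" .
    have expand: "fps_exp d * (fps_const (- x / d) * (fps_exp (2 * k * d) - 1)) ^ j
        = fps_const ((- x / d) ^ j) * (fps_exp d * (fps_exp (2 * k * d) - 1) ^ j)"
      by (simp add: power_mult_distrib fps_const_power ac_simps)
    have "(- (1 / k) gchoose j) * (fps_exp d * (fps_const (- x / d) * (fps_exp (2 * k * d) - 1)) ^ j) $ n
        = (- (1 / k) gchoose j) * ((- x / d) ^ j * d ^ n) * exp_power_coeff (2 * k) n j / fact n"
      unfolding expand fps_mult_left_const_nth fps_exp_mult_exp_minus_one_power_nth by (simp add: mult_ac)
    also have "\<dots> = exc_coeff k n j * x ^ j * d ^ (n - j) / fact n"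
      unfolding power exc_coeff_def
      by (simp only: mult_ac)
    finally show ?thesis .
  qed
  then show ?thesis
    by (simp add: fps_mult_compose_nth exc_poly_def sum_divide_distrib d_def)
qed

lemma exc_poly_Suc_expand:
  assumes "k \<noteq> 0"
  shows "exc_poly k y (Suc m) x = (\<Sum>j\<le>m. exc_coeff k m j *
           ((1 + 2 * k * of_nat j) * (x ^ j * (y - x) ^ (Suc m - j))
            + 2 * (1 + k * of_nat j) * (x ^ Suc j * (y - x) ^ (m - j))))"
proof -
  define d where "d = y - x"
  define f1 where "f1 j = exc_coeff k m j * ((1 + 2 * k * of_nat j) * (x ^ j * d ^ (Suc m - j)))" for j
  define f2 where "f2 j = exc_coeff k m j * (2 * (1 + k * of_nat j) * (x ^ Suc j * d ^ (m - j)))" for j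
  have "exc_poly k y (Suc m) x
      = exc_coeff k (Suc m) 0 * d ^ Suc m + (\<Sum>i\<le>m. exc_coeff k (Suc m) (Suc i) * x ^ Suc i * d ^ (m - i))"
    unfolding exc_poly_def d_def sum.atMost_Suc_shift by simp
  also have "\<dots> = f1 0 + (\<Sum>i\<le>m. f1 (Suc i) + f2 i)"
    unfolding f1_def f2_def exc_coeff_Suc_Suc[OF assms] by (simp add: ring_distribs mult_ac del: of_nat_Suc)
  also have "\<dots> = (\<Sum>j\<le>Suc m. f1 j) + (\<Sum>i\<le>m. f2 i)"
    by (simp only: sum.atMost_Suc_shift sum.distrib add.assoc)
  also have "(\<Sum>j\<le>Suc m. f1 j) = (\<Sum>j\<le>m. f1 j)"
    by (simp add: f1_def exc_coeff_eq_0)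
  finally show ?thesis
    by (simp add: f1_def f2_def d_def sum.distrib ring_distribs)
qed

lemma exc_poly_term_step:
  fixes x y k :: real
  assumes "j \<le> m"
  shows "(x + y + 2 * k * of_nat m * x) * (x ^ j * (y - x) ^ (m - j))
       + 2 * k * (y - x) * x * (of_nat j * x ^ (j - 1) * (y - x) ^ (m - j)
                                - of_nat (m - j) * x ^ j * (y - x) ^ (m - j - 1))
     = (1 + 2 * k * of_nat j) * (x ^ j * (y - x) ^ (Suc m - j))
       + 2 * (1 + k * of_nat j) * (x ^ Suc j * (y - x) ^ (m - j))"
proof -
  obtain r where r: "m = j + r" using assms le_Suc_ex by blast
  define d where "d = y - x"
  have "x * (of_nat j * x ^ (j - 1)) = of_nat j * x ^ j" by (cases j) auto
  moreover have "d * (of_nat r * d ^ (r - 1)) = of_nat r * d ^ r" by (cases r) auto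
  moreover have "2 * k * d * x * (of_nat j * x ^ (j - 1) * d ^ r - of_nat r * x ^ j * d ^ (r - 1))
      = 2 * k * (d * d ^ r) * (x * (of_nat j * x ^ (j - 1))) - 2 * k * (x * x ^ j) * (d * (of_nat r * d ^ (r - 1)))"
    by (simp only: right_diff_distrib mult_ac)
  ultimately have "2 * k * d * x * (of_nat j * x ^ (j - 1) * d ^ r - of_nat r * x ^ j * d ^ (r - 1))
      = 2 * k * of_nat j * (x ^ j * d ^ Suc r) - 2 * k * of_nat r * (x ^ Suc j * d ^ r)"
    by (simp only: power_Suc mult_ac)
  moreover have "y = x + d" "Suc m - j = Suc r" "m - j = r" "m - j - 1 = r - 1"
    using r by (simp_all add: d_def)
  ultimately show ?thesis
    unfolding d_def[symmetric] r by (simp add: algebra_simps)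
qed

lemma exc_poly_has_real_derivative:
  "(exc_poly k y m has_real_derivative (\<Sum>j\<le>m. exc_coeff k m j *
      (of_nat j * x ^ (j - 1) * (y - x) ^ (m - j) - of_nat (m - j) * x ^ j * (y - x) ^ (m - j - 1)))) (at x)"
  unfolding exc_poly_def [abs_def] by (auto intro!: derivative_eq_intros sum.cong simp: algebra_simps)

lemma exc_poly_Suc:
  assumes "k \<noteq> 0"
  shows "exc_poly k y (Suc m) x
       = (x + y + 2 * k * of_nat m * x) * exc_poly k y m x + 2 * k * (y - x) * x * deriv (exc_poly k y m) x"
proof -
  have "(x + y + 2 * k * of_nat m * x) * exc_poly k y m x + 2 * k * (y - x) * x * deriv (exc_poly k y m) x
      = (\<Sum>j\<le>m. exc_coeff k m j * ((x + y + 2 * k * of_nat m * x) * (x ^ j * (y - x) ^ (m - j))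
          + 2 * k * (y - x) * x * (of_nat j * x ^ (j - 1) * (y - x) ^ (m - j)
                                   - of_nat (m - j) * x ^ j * (y - x) ^ (m - j - 1))))"
    unfolding DERIV_imp_deriv[OF exc_poly_has_real_derivative] exc_poly_def
    by (simp add: sum_distrib_left sum.distrib ring_distribs mult_ac)
  also have "\<dots> = exc_poly k y (Suc m) x"
    unfolding exc_poly_Suc_expand[OF assms] by (intro sum.cong refl) (simp only: atMost_iff exc_poly_term_step)
  finally show ?thesis ..
qed

section \<open>Signed permutations and insertion of the largest letter\<close>

lemma mem_pm_set_iff: "i \<in> pm_set n \<longleftrightarrow> 1 \<le> \<bar>i\<bar> \<and> \<bar>i\<bar> \<le> int n"
  by (simp add: pm_set_def)

lemma finite_pm_set: "finite (pm_set n)"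
  by (rule finite_subset[of _ "{- int n..int n}"]) (auto simp: mem_pm_set_iff)

lemma signed_perm_fixed: "w \<in> signed_perms n \<Longrightarrow> i \<notin> pm_set n \<Longrightarrow> w i = i"
  by (simp add: signed_perms_def)

lemma signed_perm_odd:
  assumes "w \<in> signed_perms n"
  shows "w (- i) = - w i"
  using assms by (cases "i \<in> pm_set n") (auto simp: signed_perms_def mem_pm_set_iff)

lemma signed_perm_abs_bij:
  assumes w: "w \<in> signed_perms n"
  shows "bij_betw (\<lambda>i. \<bar>w i\<bar>) {1..int n} {1..int n}"
proof -
  have bij: "bij_betw w (pm_set n) (pm_set n)"
    using w by (simp add: signed_perms_def)
  have "inj_on (\<lambda>i. \<bar>w i\<bar>) {1..int n}"
  proof (rule inj_onI)
    fix i j assume ij: "i \<in> {1..int n}" "j \<in> {1..int n}" "\<bar>w i\<bar> = \<bar>w j\<bar>"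
    then have mem: "i \<in> pm_set n" "j \<in> pm_set n" "- j \<in> pm_set n"
      by (auto simp: mem_pm_set_iff)
    have "w i = w j \<or> w i = w (- j)"
      using ij(3) signed_perm_odd[OF w] by (simp add: abs_eq_iff)
    then have "i = j \<or> i = - j"
      using mem inj_onD[OF bij_betw_imp_inj_on[OF bij]] by blast
    then show "i = j"
      using ij by auto
  qed
  moreover have "(\<lambda>i. \<bar>w i\<bar>) ` {1..int n} \<subseteq> {1..int n}"
    using bij_betw_apply[OF bij] by (force simp: mem_pm_set_iff)
  ultimately show ?thesis
    by (simp add: bij_betw_def endo_inj_surj)
qed

lemma signed_permsI:
  assumes fixed: "\<And>i. i \<notin> pm_set n \<Longrightarrow> w i = i" and odd: "\<And>i. w (- i) = - w i"
    and bij: "bij_betw (\<lambda>i. \<bar>w i\<bar>) {1..int n} {1..int n}"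
  shows "w \<in> signed_perms n"
proof -
  have abs_w: "\<bar>w i\<bar> = \<bar>w \<bar>i\<bar>\<bar>" for i
    using odd[of i] by (cases "i \<ge> 0") auto
  have into: "w i \<in> pm_set n" if "i \<in> pm_set n" for i
    using bij_betw_apply[OF bij, of "\<bar>i\<bar>"] that by (auto simp: mem_pm_set_iff abs_w[of i])
  have "inj_on w (pm_set n)"
  proof (rule inj_onI)
    fix i j assume ij: "i \<in> pm_set n" "j \<in> pm_set n" "w i = w j"
    then have "\<bar>i\<bar> = \<bar>j\<bar>"
      using bij_betw_imp_inj_on[OF bij] abs_w[of i] abs_w[of j]
      by (auto simp: mem_pm_set_iff dest: inj_onD)
    moreover have "w i \<noteq> 0"
      using into[OF ij(1)] by (auto simp: mem_pm_set_iff)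
    ultimately show "i = j"
      using ij(3) odd[of j] by (auto simp: abs_eq_iff)
  qed
  then have "bij_betw w (pm_set n) (pm_set n)"
    using into finite_pm_set by (simp add: bij_betw_def endo_inj_surj image_subsetI)
  then show ?thesis
    using fixed odd by (simp add: signed_perms_def)
qed

lemma signed_perm_abs_bij_Suc:
  assumes "w \<in> signed_perms m"
  shows "bij_betw (\<lambda>i. \<bar>w i\<bar>) {1..int m + 1} {1..int m + 1}"
proof -
  have "w (int m + 1) = int m + 1"
    using assms by (simp add: signed_perm_fixed mem_pm_set_iff)
  then have "bij_betw (\<lambda>i. \<bar>w i\<bar>) ({1..int m} \<union> {int m + 1}) ({1..int m} \<union> {int m + 1})"
    using notIn_Un_bij_betw[OF _ _ signed_perm_abs_bij[OF assms], of "int m + 1"] by simp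
  moreover have "{1..int m} \<union> {int m + 1} = {1..int m + 1}" by auto
  ultimately show ?thesis by simp
qed

(* For j in [m], insert m+1 with sign s right after j in its cycle; for j = m+1 (a fixed point
   of w), add the new cycle (s(m+1)). *)
definition insert_max :: "nat \<Rightarrow> (int \<Rightarrow> int) \<Rightarrow> int \<Rightarrow> int \<Rightarrow> int \<Rightarrow> int" where
  "insert_max m w j s = w(int m + 1 := w j, - (int m + 1) := - w j,
                          j := s * (int m + 1), - j := - (s * (int m + 1)))"

lemma insert_max_mem:
  assumes w: "w \<in> signed_perms m" and j: "j \<in> {1..int m + 1}" and s: "s \<in> {1, - 1}"
  shows "insert_max m w j s \<in> signed_perms (Suc m)"
proof -
  define N where "N = int m + 1"
  have wN: "w N = N" "w (- N) = - N"
    using w by (simp_all add: N_def signed_perm_fixed mem_pm_set_iff)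
  have odd: "w (- i) = - w i" for i
    using w by (rule signed_perm_odd)
  have "\<bar>insert_max m w j s i\<bar> = ((\<lambda>i. \<bar>w i\<bar>) \<circ> Transposition.transpose j N) i"
    if "i \<in> {1..N}" for i
    using that j s wN by (auto simp: insert_max_def N_def[symmetric] transpose_def)
  then have "bij_betw (\<lambda>i. \<bar>insert_max m w j s i\<bar>) {1..N} {1..N}
      = bij_betw ((\<lambda>i. \<bar>w i\<bar>) \<circ> Transposition.transpose j N) {1..N} {1..N}"
    by (rule bij_betw_cong)
  also have "\<dots>"
    using j signed_perm_abs_bij_Suc[OF w] by (simp add: bij_betw_swap_iff N_def)
  finally have "bij_betw (\<lambda>i. \<bar>insert_max m w j s i\<bar>) {1..N} {1..N}" .
  moreover have "insert_max m w j s i = i" if "i \<notin> pm_set (Suc m)" for i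
    using that j signed_perm_fixed[OF w, of i] by (auto simp: insert_max_def mem_pm_set_iff)
  moreover have "insert_max m w j s (- i) = - insert_max m w j s i" for i
    using j by (auto simp: insert_max_def odd wN N_def[symmetric])
  ultimately show ?thesis
    by (intro signed_permsI) (simp_all add: N_def add.commute)
qed

definition max_preimage :: "nat \<Rightarrow> (int \<Rightarrow> int) \<Rightarrow> int" where
  "max_preimage m w = (THE p. p \<in> {1..int m + 1} \<and> \<bar>w p\<bar> = int m + 1)"

definition remove_max :: "nat \<Rightarrow> (int \<Rightarrow> int) \<Rightarrow> (int \<Rightarrow> int)" where
  "remove_max m w = w(max_preimage m w := w (int m + 1), - max_preimage m w := - w (int m + 1),
                      int m + 1 := int m + 1, - (int m + 1) := - (int m + 1))"

lemma max_preimage_eqI: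
  assumes w: "w \<in> signed_perms (Suc m)" and p: "p \<in> {1..int m + 1}" "\<bar>w p\<bar> = int m + 1"
  shows "max_preimage m w = p"
  unfolding max_preimage_def
proof (rule the_equality)
  have inj: "inj_on (\<lambda>i. \<bar>w i\<bar>) {1..int m + 1}"
    using bij_betw_imp_inj_on[OF signed_perm_abs_bij[OF w]] by (simp add: add.commute)
  show "q = p" if "q \<in> {1..int m + 1} \<and> \<bar>w q\<bar> = int m + 1" for q
    using inj_onD[OF inj, of q p] that p by auto
qed (use p in blast)

lemma max_preimage:
  assumes w: "w \<in> signed_perms (Suc m)"
  shows "max_preimage m w \<in> {1..int m + 1}" "\<bar>w (max_preimage m w)\<bar> = int m + 1"
proof -
  have "int m + 1 \<in> (\<lambda>i. \<bar>w i\<bar>) ` {1..int m + 1}"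
    using bij_betw_imp_surj_on[OF signed_perm_abs_bij[OF w]] by (simp add: add.commute)
  then obtain p where "p \<in> {1..int m + 1}" "\<bar>w p\<bar> = int m + 1" by auto
  with max_preimage_eqI[OF w] show "max_preimage m w \<in> {1..int m + 1}" "\<bar>w (max_preimage m w)\<bar> = int m + 1"
    by simp_all
qed

lemma remove_max_mem:
  assumes w: "w \<in> signed_perms (Suc m)"
  shows "remove_max m w \<in> signed_perms m"
proof -
  define p where "p = max_preimage m w"
  have p: "p \<in> {1..int m + 1}" "\<bar>w p\<bar> = int m + 1"
    using max_preimage[OF w] by (simp_all add: p_def)
  let ?f = "(\<lambda>i. \<bar>w i\<bar>) \<circ> Transposition.transpose p (int m + 1)"
  have "bij_betw ?f {1..int m + 1} {1..int m + 1}"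
    using p signed_perm_abs_bij[OF w] by (simp add: bij_betw_swap_iff add.commute)
  then have "bij_betw ?f ({1..int m + 1} - {int m + 1}) ({1..int m + 1} - {int m + 1})"
    by (rule bij_betw_DiffI) (use p in auto)
  also have "{1..int m + 1} - {int m + 1} = {1..int m}"
    by auto
  finally have bij: "bij_betw ?f {1..int m} {1..int m}" .
  have "\<bar>remove_max m w i\<bar> = ?f i" if "i \<in> {1..int m}" for i
    using that p by (auto simp: remove_max_def p_def[symmetric] transpose_def)
  then have "bij_betw (\<lambda>i. \<bar>remove_max m w i\<bar>) {1..int m} {1..int m} = bij_betw ?f {1..int m} {1..int m}"
    by (rule bij_betw_cong)
  with bij have "bij_betw (\<lambda>i. \<bar>remove_max m w i\<bar>) {1..int m} {1..int m}"
    by simp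
  moreover have "remove_max m w i = i" if "i \<notin> pm_set m" for i
    using that p signed_perm_fixed[OF w, of i]
    by (auto simp: remove_max_def p_def[symmetric] mem_pm_set_iff)
  moreover have "remove_max m w (- i) = - remove_max m w i" for i
    using p signed_perm_odd[OF w] by (auto simp: remove_max_def p_def[symmetric])
  ultimately show ?thesis
    by (intro signed_permsI) simp_all
qed

lemma remove_insert_max:
  assumes w: "w \<in> signed_perms m" and j: "j \<in> {1..int m + 1}" and s: "s \<in> {1, - 1}"
  shows "max_preimage m (insert_max m w j s) = j" "sgn (insert_max m w j s j) = s"
    "remove_max m (insert_max m w j s) = w"
proof -
  have wN: "w (int m + 1) = int m + 1" "w (- (int m + 1)) = - (int m + 1)"
    using w by (simp_all add: signed_perm_fixed mem_pm_set_iff)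
  have wj: "insert_max m w j s j = s * (int m + 1)"
    using j by (simp add: insert_max_def)
  then show j': "max_preimage m (insert_max m w j s) = j"
    using s by (intro max_preimage_eqI[OF insert_max_mem[OF w j s] j]) (auto simp: abs_mult)
  show "sgn (insert_max m w j s j) = s"
    using s by (auto simp: wj sgn_mult)
  show "remove_max m (insert_max m w j s) = w"
    using j wN signed_perm_odd[OF w, of j]
    unfolding remove_max_def j' by (auto simp: fun_eq_iff insert_max_def)
qed

lemma insert_remove_max:
  assumes w: "w \<in> signed_perms (Suc m)"
  shows "insert_max m (remove_max m w) (max_preimage m w) (sgn (w (max_preimage m w))) = w"
proof -
  define p where "p = max_preimage m w"
  have p: "p \<in> {1..int m + 1}" "\<bar>w p\<bar> = int m + 1"
    using max_preimage[OF w] by (simp_all add: p_def)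
  then have "sgn (w p) * (int m + 1) = w p"
    by (metis abs_mult_sgn mult.commute)
  then show ?thesis
    using p signed_perm_odd[OF w, of p] signed_perm_odd[OF w, of "int m + 1"]
    by (auto simp: fun_eq_iff insert_max_def remove_max_def p_def[symmetric])
qed

lemma bij_betw_insert_max:
  "bij_betw (\<lambda>(w, j, s). insert_max m w j s)
     (signed_perms m \<times> {1..int m + 1} \<times> {1, - 1}) (signed_perms (Suc m))"
proof (rule bij_betw_byWitness[where f' = "\<lambda>w. (remove_max m w, max_preimage m w, sgn (w (max_preimage m w)))"])
  have "sgn (w (max_preimage m w)) \<in> {1, - 1}" if "w \<in> signed_perms (Suc m)" for w
    using max_preimage[OF that] by (auto simp: sgn_if)
  then show "(\<lambda>w. (remove_max m w, max_preimage m w, sgn (w (max_preimage m w)))) ` signed_perms (Suc m)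
      \<subseteq> signed_perms m \<times> {1..int m + 1} \<times> {1, - 1}"
    using max_preimage remove_max_mem by auto
qed (auto simp: remove_insert_max insert_remove_max insert_max_mem)

section \<open>Orbits and cycles\<close>

lemma orbit_subset_if_closed:
  assumes "x \<in> S" "f ` S \<subseteq> S"
  shows "orbit f x \<subseteq> S"
proof
  fix y assume "y \<in> orbit f x"
  then show "y \<in> S"
    by (induction rule: orbit.induct) (use assms in auto)
qed

lemma self_in_orbit_if_inj_on:
  assumes fin: "finite S" and cl: "f ` S \<subseteq> S" and inj: "inj_on f S" and x: "x \<in> S"
  shows "x \<in> orbit f x"
proof -
  define g where "g y = (if y \<in> S then f y else y)" for y
  have "bij_betw g S S"
    using endo_inj_surj[OF fin cl inj] inj by (simp add: bij_betw_def g_def cong: inj_on_cong image_cong)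
  then have "g permutes S"
    by (rule bij_imp_permutes) (simp add: g_def)
  then have "x \<in> orbit g x"
    using fin by (intro permutation_self_in_orbit) (auto simp: permutation_permutes)
  also have "orbit g x = orbit f x"
    using x cl by (intro orbit_cong0[of x S]) (auto simp: g_def)
  finally show ?thesis .
qed

lemma card_orbits_insert_fixed:
  assumes "finite S" "f ` S \<subseteq> S" "N \<notin> S"
  shows "card ((\<lambda>x. orbit (f(N := N)) x) ` insert N S) = Suc (card ((\<lambda>x. orbit f x) ` S))"
proof -
  have "orbit (f(N := N)) x = orbit f x" if "x \<in> S" for x
    using that assms by (intro orbit_cong0[of x S]) auto
  moreover have "orbit (f(N := N)) N = {N}"
    by (simp add: orbit_eq_singleton_iff)
  ultimately have "(\<lambda>x. orbit (f(N := N)) x) ` insert N S = insert {N} ((\<lambda>x. orbit f x) ` S)"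
    by (simp cong: image_cong)
  moreover have "{N} \<notin> (\<lambda>x. orbit f x) ` S"
    using orbit_subset_if_closed[of _ S f] assms by blast
  ultimately show ?thesis
    using assms by simp
qed

context
  fixes f :: "'a \<Rightarrow> 'a" and S :: "'a set" and N j :: 'a
  assumes fin: "finite S" and cl: "f ` S \<subseteq> S" and inj: "inj_on f S"
    and N: "N \<notin> S" and j: "j \<in> S"
begin

lemma orbit_subset_orbit_insert_after:
  assumes x: "x \<in> S"
  shows "orbit f x \<subseteq> orbit (f(j := N, N := f j)) x"
proof -
  have f_step: "f y \<in> orbit (f(j := N, N := f j)) x"
    if "y \<in> S" "y = x \<or> y \<in> orbit (f(j := N, N := f j)) x" for y
  proof -
    have step: "(f(j := N, N := f j)) y \<in> orbit (f(j := N, N := f j)) x"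
      using that orbit.base[of "f(j := N, N := f j)" x] orbit.step[of y "f(j := N, N := f j)" x] by blast
    show ?thesis
    proof (cases "y = j")
      case True
      then have "N \<in> orbit (f(j := N, N := f j)) x"
        using step N j by (auto split: if_splits)
      then have "(f(j := N, N := f j)) N \<in> orbit (f(j := N, N := f j)) x"
        by (rule orbit.step)
      then show ?thesis using True N j by simp
    next
      case False
      then have "(f(j := N, N := f j)) y = f y"
        using that(1) N by auto
      then show ?thesis using step by simp
    qed
  qed
  have "orbit f x \<subseteq> S"
    using x cl by (rule orbit_subset_if_closed)
  then show ?thesis
  proof (intro subsetI)
    fix z assume "z \<in> orbit f x"
    then show "z \<in> orbit (f(j := N, N := f j)) x"
      by (induction rule: orbit.induct) (use x \<open>orbit f x \<subseteq> S\<close> f_step in blast)+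
  qed
qed

lemma orbit_insert_after_old:
  assumes x: "x \<in> S"
  shows "orbit (f(j := N, N := f j)) x = (if j \<in> orbit f x then insert N (orbit f x) else orbit f x)"
proof -
  have orb: "orbit f x \<subseteq> S"
    using x cl by (rule orbit_subset_if_closed)
  show ?thesis
  proof (cases "j \<in> orbit f x")
    case False
    then have "orbit (f(j := N, N := f j)) x = orbit f x"
      using orb N self_in_orbit_if_inj_on[OF fin cl inj x]
      by (intro orbit_cong0[of x "orbit f x"]) (auto intro: orbit.step)
    then show ?thesis using False by simp
  next
    case True
    have "orbit (f(j := N, N := f j)) x \<subseteq> insert N (orbit f x)"
    proof (rule orbit_subset_if_closed)
      show "x \<in> insert N (orbit f x)"
        using self_in_orbit_if_inj_on[OF fin cl inj x] by simp
      show "f(j := N, N := f j) ` insert N (orbit f x) \<subseteq> insert N (orbit f x)"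
        using True N orb by (auto intro: orbit.step)
    qed
    moreover have "N \<in> orbit (f(j := N, N := f j)) x"
      using True orbit_subset_orbit_insert_after[OF x] orbit.step[of j "f(j := N, N := f j)" x] N j
      by (auto split: if_splits)
    ultimately show ?thesis
      using True orbit_subset_orbit_insert_after[OF x] by auto
  qed
qed

lemma orbit_insert_after_new: "orbit (f(j := N, N := f j)) N = insert N (orbit f j)"
proof -
  have fj: "f j \<in> S"
    using j cl by auto
  have jj: "j \<in> orbit f j"
    by (rule self_in_orbit_if_inj_on[OF fin cl inj j])
  have fj_orbit: "orbit (f(j := N, N := f j)) (f j) = insert N (orbit f j)"
    using orbit_insert_after_old[OF fj] self_in_orbit_step[OF jj] jj by simp
  moreover have "f j \<in> orbit (f(j := N, N := f j)) N"
    using orbit.base[of "f(j := N, N := f j)" N] by simp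
  moreover have "N \<in> orbit (f(j := N, N := f j)) (f j)"
    using fj_orbit by simp
  ultimately show ?thesis
    using orbit_trans[of _ "f(j := N, N := f j)"] by blast
qed

lemma card_orbits_insert_after:
  "card ((\<lambda>x. orbit (f(j := N, N := f j)) x) ` insert N S) = card ((\<lambda>x. orbit f x) ` S)"
proof -
  define h where "h X = (if j \<in> X then insert N X else X)" for X
  have "orbit (f(j := N, N := f j)) N = h (orbit f j)"
    using orbit_insert_after_new self_in_orbit_if_inj_on[OF fin cl inj j] by (simp add: h_def)
  moreover have "orbit (f(j := N, N := f j)) x = h (orbit f x)" if "x \<in> S" for x
    using orbit_insert_after_old[OF that] by (simp add: h_def)
  ultimately have "(\<lambda>x. orbit (f(j := N, N := f j)) x) ` insert N S = h ` (\<lambda>x. orbit f x) ` S"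
    using j by (auto simp: image_iff)
  moreover have "inj_on h ((\<lambda>x. orbit f x) ` S)"
  proof (rule inj_onI)
    fix X Y assume "X \<in> (\<lambda>x. orbit f x) ` S" "Y \<in> (\<lambda>x. orbit f x) ` S" "h X = h Y"
    moreover have "Z = h Z - {N}" if "Z \<in> (\<lambda>x. orbit f x) ` S" for Z
      using that orbit_subset_if_closed[OF _ cl] N by (auto simp: h_def)
    ultimately show "X = Y"
      by metis
  qed
  ultimately show ?thesis
    by (simp add: card_image)
qed

end

lemma cyc_le: "cyc n w \<le> n"
proof -
  have "cyc n w \<le> card {1..int n}"
    unfolding cyc_def by (rule card_image_le) simp
  then show ?thesis by simp
qed

lemma cyc_eq_card_orbits:
  assumes w: "w \<in> signed_perms n" and f: "\<And>i. i \<in> {1..int n} \<Longrightarrow> \<bar>w i\<bar> = f i"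
  shows "cyc n w = card ((\<lambda>i. orbit f i) ` {1..int n})"
proof -
  have bij: "bij_betw (\<lambda>i. \<bar>w i\<bar>) {1..int n} {1..int n}"
    using w by (rule signed_perm_abs_bij)
  have "{((\<lambda>j. \<bar>w j\<bar>) ^^ t) i | t. True} = orbit f i" if i: "i \<in> {1..int n}" for i
  proof -
    have "i \<in> orbit (\<lambda>j. \<bar>w j\<bar>) i"
      using bij i by (intro self_in_orbit_if_inj_on[of "{1..int n}"]) (auto simp: bij_betw_def)
    then have "{((\<lambda>j. \<bar>w j\<bar>) ^^ t) i | t. True} = orbit (\<lambda>j. \<bar>w j\<bar>) i"
      by (rule orbit_altdef_self_in[symmetric])
    also have "\<dots> = orbit f i"
      using i f bij_betw_apply[OF bij] by (intro orbit_cong0[of i "{1..int n}"]) auto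
    finally show ?thesis .
  qed
  then have "(\<lambda>i. {((\<lambda>j. \<bar>w j\<bar>) ^^ t) i | t. True}) ` {1..int n}
      = (\<lambda>i. orbit f i) ` {1..int n}"
    by (rule image_cong[OF refl])
  then show ?thesis
    unfolding cyc_def by simp
qed

lemma cyc_insert_max_new:
  assumes w: "w \<in> signed_perms m" and s: "s \<in> {1, - 1}"
  shows "cyc (Suc m) (insert_max m w (int m + 1) s) = Suc (cyc m w)"
proof -
  let ?f = "\<lambda>i. \<bar>w i\<bar>"
  have ins: "{1..int (Suc m)} = insert (int m + 1) {1..int m}"
    by auto
  have "cyc (Suc m) (insert_max m w (int m + 1) s)
      = card ((\<lambda>i. orbit (?f(int m + 1 := int m + 1)) i) ` {1..int (Suc m)})"
    using s by (intro cyc_eq_card_orbits insert_max_mem[OF w]) (auto simp: insert_max_def abs_mult)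
  also have "\<dots> = Suc (card ((\<lambda>i. orbit ?f i) ` {1..int m}))"
    unfolding ins using bij_betw_apply[OF signed_perm_abs_bij[OF w]] by (intro card_orbits_insert_fixed) auto
  also have "\<dots> = Suc (cyc m w)"
    using cyc_eq_card_orbits[OF w] by simp
  finally show ?thesis .
qed

lemma cyc_insert_max_old:
  assumes w: "w \<in> signed_perms m" and j: "j \<in> {1..int m}" and s: "s \<in> {1, - 1}"
  shows "cyc (Suc m) (insert_max m w j s) = cyc m w"
proof -
  let ?f = "\<lambda>i. \<bar>w i\<bar>"
  have ins: "{1..int (Suc m)} = insert (int m + 1) {1..int m}"
    by auto
  have bij: "bij_betw ?f {1..int m} {1..int m}"
    using w by (rule signed_perm_abs_bij)
  have "cyc (Suc m) (insert_max m w j s)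
      = card ((\<lambda>i. orbit (?f(j := int m + 1, int m + 1 := ?f j)) i) ` {1..int (Suc m)})"
    using s j by (intro cyc_eq_card_orbits insert_max_mem[OF w]) (auto simp: insert_max_def abs_mult)
  also have "\<dots> = card ((\<lambda>i. orbit ?f i) ` {1..int m})"
    unfolding ins using j bij_betw_imp_surj_on[OF bij] bij_betw_imp_inj_on[OF bij]
    by (intro card_orbits_insert_after) auto
  also have "\<dots> = cyc m w"
    using cyc_eq_card_orbits[OF w] by simp
  finally show ?thesis .
qed

section \<open>Weak excedances\<close>

definition is_wexc :: "(int \<Rightarrow> int) \<Rightarrow> int \<Rightarrow> bool" where
  "is_wexc w i \<longleftrightarrow> w i = i \<or> w \<bar>w i\<bar> > w i"

lemma wexc_eq_card: "wexc n w = card {i \<in> {1..int n}. is_wexc w i}"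
  unfolding wexc_def is_wexc_def ..

lemma wexc_eq_sum: "of_nat (wexc n w) = (\<Sum>i\<in>{1..int n}. of_bool (is_wexc w i) :: 'a::semiring_1)"
  unfolding wexc_eq_card by (subst sum_of_bool_eq) (simp_all add: Int_def)

lemma wexc_le: "wexc n w \<le> n"
proof -
  have "wexc n w \<le> card {1..int n}"
    unfolding wexc_def by (rule card_mono) auto
  then show ?thesis by simp
qed

lemma aexc_eq_diff_wexc:
  assumes w: "w \<in> signed_perms n"
  shows "aexc n w = n - wexc n w"
proof -
  have inj: "inj_on w (pm_set n)"
    using w by (simp add: signed_perms_def bij_betw_def)
  have "w i = - i \<or> w \<bar>w i\<bar> < w i \<longleftrightarrow> \<not> is_wexc w i" if i: "i \<in> {1..int n}" for i
  proof -
    have mem: "\<bar>w i\<bar> \<in> pm_set n" "i \<in> pm_set n"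
      using bij_betw_apply[OF signed_perm_abs_bij[OF w] i] i by (auto simp: mem_pm_set_iff)
    consider "w i = i" | "w i = - i" | "\<bar>w i\<bar> \<noteq> i"
      by linarith
    then show ?thesis
    proof cases
      case 3
      then have "w \<bar>w i\<bar> \<noteq> w i"
        using inj_onD[OF inj _ mem] by auto
      then show ?thesis
        using 3 i by (auto simp: is_wexc_def)
    qed (use i in \<open>auto simp: is_wexc_def\<close>)
  qed
  then have "{i \<in> {1..int n}. w i = - i \<or> w \<bar>w i\<bar> < w i} = {1..int n} - {i \<in> {1..int n}. is_wexc w i}"
    by blast
  then have "aexc n w = card ({1..int n} - {i \<in> {1..int n}. is_wexc w i})"
    by (simp only: aexc_def)
  also have "\<dots> = card {1..int n} - card {i \<in> {1..int n}. is_wexc w i}"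
    by (rule card_Diff_subset) (auto intro: finite_subset[of _ "{1..int n}"])
  also have "\<dots> = n - wexc n w"
    by (simp add: wexc_eq_card)
  finally show ?thesis .
qed

lemma wexc_Suc_eq_sum:
  "int (wexc (Suc m) w) = of_bool (is_wexc w (int m + 1)) + (\<Sum>i\<in>{1..int m}. of_bool (is_wexc w i))"
proof -
  have "{1..int (Suc m)} = insert (int m + 1) {1..int m}"
    by auto
  then show ?thesis
    unfolding wexc_eq_sum by (simp only:) (rule sum.insert; simp)
qed

lemma wexc_insert_max_new:
  assumes w: "w \<in> signed_perms m" and s: "s \<in> {1, - 1}"
  shows "wexc (Suc m) (insert_max m w (int m + 1) s) = wexc m w + of_bool (s = 1)"
proof -
  have wN: "w (int m + 1) = int m + 1" "w (- (int m + 1)) = - (int m + 1)"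
    using w by (simp_all add: signed_perm_fixed mem_pm_set_iff)
  have "is_wexc (insert_max m w (int m + 1) s) i \<longleftrightarrow> is_wexc w i" if "i \<in> {1..int m}" for i
    using that bij_betw_apply[OF signed_perm_abs_bij[OF w] that] by (auto simp: is_wexc_def insert_max_def)
  then have "(\<Sum>i\<in>{1..int m}. of_bool (is_wexc (insert_max m w (int m + 1) s) i))
      = (\<Sum>i\<in>{1..int m}. of_bool (is_wexc w i) :: int)"
    by (intro sum.cong) simp_all
  moreover have "is_wexc (insert_max m w (int m + 1) s) (int m + 1) \<longleftrightarrow> s = 1"
    using s by (auto simp: is_wexc_def insert_max_def wN)
  ultimately have "int (wexc (Suc m) (insert_max m w (int m + 1) s)) = of_bool (s = 1) + int (wexc m w)"
    unfolding wexc_Suc_eq_sum wexc_eq_sum[of m] by (simp only:)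
  then show ?thesis
    by (metis add.commute of_nat_add of_nat_eq_iff of_nat_of_bool)
qed

lemma is_wexc_insert_max_unchanged:
  assumes w: "w \<in> signed_perms m" and j: "j \<in> {1..int m}"
    and i: "i \<in> {1..int m}" "i \<noteq> j" "\<bar>w i\<bar> \<noteq> j"
  shows "is_wexc (insert_max m w j s) i \<longleftrightarrow> is_wexc w i"
  using bij_betw_apply[OF signed_perm_abs_bij[OF w] i(1)] i j by (auto simp: is_wexc_def insert_max_def)

lemma is_wexc_insert_max_changed:
  assumes w: "w \<in> signed_perms m" and p: "p \<in> {1..int m}" and s: "s \<in> {1, - 1}"
  defines "j \<equiv> \<bar>w p\<bar>"
  shows "is_wexc (insert_max m w j s) j \<longleftrightarrow> s = - 1"
    and "is_wexc (insert_max m w j s) (int m + 1) \<longleftrightarrow> (if p = j then s = 1 else is_wexc w j)"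
    and "p \<noteq> j \<Longrightarrow> is_wexc (insert_max m w j s) p \<longleftrightarrow> s = 1"
proof -
  have bij: "bij_betw (\<lambda>i. \<bar>w i\<bar>) {1..int m} {1..int m}"
    using w by (rule signed_perm_abs_bij)
  have range: "\<bar>w i\<bar> \<in> {1..int m}" if "i \<in> {1..int m}" for i
    using bij_betw_apply[OF bij that] .
  have j: "j \<in> {1..int m}"
    unfolding j_def using range[OF p] .
  have w'j: "insert_max m w j t j = t * (int m + 1)" and w'N: "insert_max m w j t (int m + 1) = w j" for t
    using j by (auto simp: insert_max_def)
  show "is_wexc (insert_max m w j s) j \<longleftrightarrow> s = - 1"
    using range[OF j] s j by (auto simp: is_wexc_def w'j w'N abs_mult)
  show "is_wexc (insert_max m w j s) (int m + 1) \<longleftrightarrow> (if p = j then s = 1 else is_wexc w j)"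
  proof (cases "p = j")
    case True
    then have "\<bar>w j\<bar> = j"
      by (simp add: j_def)
    then show ?thesis
      using True range[OF j] s j by (auto simp: is_wexc_def w'N w'j)
  next
    case False
    then have "\<bar>w j\<bar> \<noteq> j"
      using p j inj_onD[OF bij_betw_imp_inj_on[OF bij], of j p] by (auto simp: j_def)
    then show ?thesis
      using False range[OF j] j by (auto simp: is_wexc_def w'N insert_max_def)
  qed
  show "is_wexc (insert_max m w j s) p \<longleftrightarrow> s = 1" if "p \<noteq> j"
    using that p j range[OF p] s by (auto simp: is_wexc_def insert_max_def j_def)
qed

lemma wexc_insert_max_old:
  assumes w: "w \<in> signed_perms m" and p: "p \<in> {1..int m}" and s: "s \<in> {1, - 1}"
  shows "wexc (Suc m) (insert_max m w \<bar>w p\<bar> s) + of_bool (is_wexc w p) = wexc m w + 1"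
proof -
  define j where "j = \<bar>w p\<bar>"
  define w' where "w' = insert_max m w j s"
  have bij: "bij_betw (\<lambda>i. \<bar>w i\<bar>) {1..int m} {1..int m}"
    using w by (rule signed_perm_abs_bij)
  have j: "j \<in> {1..int m}"
    unfolding j_def using bij_betw_apply[OF bij p] .
  have "is_wexc w' i \<longleftrightarrow> is_wexc w i" if "i \<in> {1..int m} - {j, p}" for i
    unfolding w'_def using that p inj_onD[OF bij_betw_imp_inj_on[OF bij], of i p]
    by (intro is_wexc_insert_max_unchanged[OF w j]) (auto simp: j_def)
  then have "(\<Sum>i\<in>{1..int m}. of_bool (is_wexc w' i) - of_bool (is_wexc w i) :: int)
      = (\<Sum>i\<in>{j, p}. of_bool (is_wexc w' i) - of_bool (is_wexc w i))"
    using j p by (intro sum.mono_neutral_right) auto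
  then have "int (wexc (Suc m) w') - int (wexc m w)
      = of_bool (is_wexc w' (int m + 1)) + (\<Sum>i\<in>{j, p}. of_bool (is_wexc w' i) - of_bool (is_wexc w i))"
    unfolding wexc_Suc_eq_sum wexc_eq_sum[of m] by (simp add: sum_subtractf)
  also have "\<dots> = 1 - of_bool (is_wexc w p)"
    unfolding w'_def using is_wexc_insert_max_changed[OF w p s, folded j_def] s
    by (cases "p = j") auto
  finally show ?thesis
    unfolding w'_def j_def by (cases "is_wexc w p") auto
qed

definition exc_weight :: "nat \<Rightarrow> real \<Rightarrow> real \<Rightarrow> real \<Rightarrow> (int \<Rightarrow> int) \<Rightarrow> real" where
  "exc_weight n x y k w = x ^ wexc n w * y ^ (n - wexc n w) * k ^ (n - cyc n w)"

lemma F_poly_eq_sum_exc_weight: "F_poly n x y k = (\<Sum>w\<in>signed_perms n. exc_weight n x y k w)"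
  unfolding F_poly_def exc_weight_def by (intro sum.cong refl) (simp add: aexc_eq_diff_wexc)

lemma exc_weight_insert_max_new:
  assumes w: "w \<in> signed_perms m" and s: "s \<in> {1, - 1}"
  shows "exc_weight (Suc m) x y k (insert_max m w (int m + 1) s)
       = (if s = 1 then x else y) * exc_weight m x y k w"
  using s wexc_insert_max_new[OF w s] cyc_insert_max_new[OF w s] wexc_le[of m w]
  by (auto simp: exc_weight_def Suc_diff_le)

lemma exc_weight_insert_max_old:
  assumes w: "w \<in> signed_perms m" and p: "p \<in> {1..int m}" and s: "s \<in> {1, - 1}"
  shows "exc_weight (Suc m) x y k (insert_max m w \<bar>w p\<bar> s)
       = k * (if is_wexc w p then y else x) * exc_weight m x y k w"
proof -
  have "\<bar>w p\<bar> \<in> {1..int m}"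
    using bij_betw_apply[OF signed_perm_abs_bij[OF w] p] .
  then have "cyc (Suc m) (insert_max m w \<bar>w p\<bar> s) = cyc m w"
    using cyc_insert_max_old[OF w _ s] by simp
  then show ?thesis
    using wexc_insert_max_old[OF w p s] wexc_le[of m w] cyc_le[of m w]
    by (cases "is_wexc w p") (auto simp: exc_weight_def Suc_diff_le)
qed

lemma sum_exc_weight_insert_max:
  assumes w: "w \<in> signed_perms m"
  shows "(\<Sum>(j, s)\<in>{1..int m + 1} \<times> {1, - 1}. exc_weight (Suc m) x y k (insert_max m w j s))
       = (x + y + 2 * k * of_nat m * x) * exc_weight m x y k w
         + 2 * k * (y - x) * (of_nat (wexc m w) * exc_weight m x y k w)"
proof -
  let ?P = "exc_weight m x y k w"
  let ?g = "\<lambda>j. \<Sum>s\<in>{1, - 1}. exc_weight (Suc m) x y k (insert_max m w j s)"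
  have "(\<Sum>(j, s)\<in>{1..int m + 1} \<times> {1, - 1}. exc_weight (Suc m) x y k (insert_max m w j s))
      = (\<Sum>j\<in>insert (int m + 1) {1..int m}. ?g j)"
    by (simp add: sum.cartesian_product[symmetric] atLeastAtMostPlus1_int_conv add.commute)
  also have "\<dots> = ?g (int m + 1) + (\<Sum>j\<in>{1..int m}. ?g j)"
    by (rule sum.insert) auto
  also have "(\<Sum>j\<in>{1..int m}. ?g j) = (\<Sum>p\<in>{1..int m}. ?g \<bar>w p\<bar>)"
    by (rule sum.reindex_bij_betw[OF signed_perm_abs_bij[OF w], symmetric])
  also have "?g (int m + 1) = (x + y) * ?P"
    using exc_weight_insert_max_new[OF w] by (simp add: algebra_simps)
  also have "(\<Sum>p\<in>{1..int m}. ?g \<bar>w p\<bar>)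
      = (\<Sum>p\<in>{1..int m}. 2 * k * ?P * (x + (y - x) * of_bool (is_wexc w p)))"
    using exc_weight_insert_max_old[OF w] by (intro sum.cong) (auto simp: algebra_simps)
  also have "\<dots> = 2 * k * ?P * (of_nat m * x + (y - x) * of_nat (wexc m w))"
    by (simp add: sum.distrib sum_distrib_left[symmetric] wexc_eq_sum[where 'a = real])
  finally show ?thesis
    by (simp add: algebra_simps)
qed

lemma F_poly_has_real_derivative:
  "((\<lambda>x. F_poly m x y k) has_real_derivative
      (\<Sum>w\<in>signed_perms m. of_nat (wexc m w) * x ^ (wexc m w - 1) * y ^ (m - wexc m w) * k ^ (m - cyc m w)))
    (at x)"
  unfolding F_poly_eq_sum_exc_weight exc_weight_def by (auto intro!: derivative_eq_intros sum.cong)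

lemma F_poly_Suc:
  "F_poly (Suc m) x y k
     = (x + y + 2 * k * of_nat m * x) * F_poly m x y k + 2 * k * (y - x) * x * deriv (\<lambda>x. F_poly m x y k) x"
proof -
  have x_deriv: "x * deriv (\<lambda>x. F_poly m x y k) x
      = (\<Sum>w\<in>signed_perms m. of_nat (wexc m w) * exc_weight m x y k w)"
    unfolding DERIV_imp_deriv[OF F_poly_has_real_derivative] sum_distrib_left
  proof (intro sum.cong refl)
    fix w
    show "x * (of_nat (wexc m w) * x ^ (wexc m w - 1) * y ^ (m - wexc m w) * k ^ (m - cyc m w))
        = of_nat (wexc m w) * exc_weight m x y k w"
      by (cases "wexc m w") (simp_all add: exc_weight_def algebra_simps)
  qed
  have "F_poly (Suc m) x y k
      = (\<Sum>(w, j, s)\<in>signed_perms m \<times> {1..int m + 1} \<times> {1, - 1}.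
           exc_weight (Suc m) x y k (insert_max m w j s))"
    unfolding F_poly_eq_sum_exc_weight
    using sum.reindex_bij_betw[OF bij_betw_insert_max, of "exc_weight (Suc m) x y k"] by (simp add: case_prod_unfold)
  also have "\<dots> = (\<Sum>w\<in>signed_perms m. \<Sum>(j, s)\<in>{1..int m + 1} \<times> {1, - 1}.
      exc_weight (Suc m) x y k (insert_max m w j s))"
    by (rule sum.cartesian_product[symmetric])
  also have "\<dots> = (\<Sum>w\<in>signed_perms m. (x + y + 2 * k * of_nat m * x) * exc_weight m x y k w
      + 2 * k * (y - x) * (of_nat (wexc m w) * exc_weight m x y k w))"
    by (intro sum.cong refl) (rule sum_exc_weight_insert_max)
  also have "\<dots> = (x + y + 2 * k * of_nat m * x) * F_poly m x y k
      + 2 * k * (y - x) * (\<Sum>w\<in>signed_perms m. of_nat (wexc m w) * exc_weight m x y k w)"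
    by (simp add: F_poly_eq_sum_exc_weight sum.distrib sum_distrib_left)
  finally show ?thesis
    by (simp only: mult.assoc x_deriv)
qed

lemma F_poly_0: "F_poly 0 x y k = 1"
proof -
  have "pm_set 0 = {}"
    by (auto simp: pm_set_def)
  then have "signed_perms 0 = {\<lambda>i. i}"
    by (auto simp: signed_perms_def fun_eq_iff bij_betw_def)
  then show ?thesis
    by (simp add: F_poly_def wexc_def aexc_def)
qed

lemma F_poly_eq_exc_poly:
  assumes "k \<noteq> 0"
  shows "F_poly n x y k = exc_poly k y n x"
proof (induction n arbitrary: x)
  case 0
  then show ?case by (simp add: F_poly_0 exc_poly_def)
next
  case (Suc m)
  then have "(\<lambda>x. F_poly m x y k) = exc_poly k y m"
    by blast
  then show ?case
    using Suc by (simp add: F_poly_Suc exc_poly_Suc[OF assms])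
qed

theorem lemma4:
  fixes x y k :: real
  assumes "k > 0" and "x \<noteq> y"
  shows "Abs_fps (\<lambda>n. F_poly n x y k / fact n)
       = fps_powr1
           (fps_const (y - x) * fps_exp (k * (y - x))
              / (fps_const y - fps_const x * fps_exp (2 * k * (y - x))))
           (1 / k)"
proof -
  have k: "k \<noteq> 0" using assms(1) by simp
  show ?thesis
    unfolding fps_powr1_excedance_gf[OF k assms(2)]
    by (rule fps_ext) (simp only: fps_nth_Abs_fps excedance_gf_nth[OF assms(2)] F_poly_eq_exc_poly[OF k])
qed

end
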